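(* The element $g_{-1}(x):=x-2$ lies in $\mathcal{F}_{-1}$ and is invertible in $\mathbb{K}[[x]]$, and the $\mathbb{Z}$-graded algebra $\mathcal{F}=\bigoplus_{r\in\mathbb{Z}}\mathcal{F}_r$ is isomorphic to the algebra $\mathcal{F}_0[T,T^{-1}]$ of Laurent polynomials in a variable $T$ of degree $-1$ with coefficients in $\mathcal{F}_0$, via the map sending $\rho\,T^{j}$ ($\rho\in\mathcal{F}_0$, $j\in\mathbb{Z}$) to $\rho(x)(x-2)^{j}\in\mathcal{F}_{-j}$.
   Context: $\mathbb{K}$ is one of $\mathbb{Q},\mathbb{R},\mathbb{C}$. For $r\in\mathbb{Z}$, $\mathcal{F}_r\subset\mathbb{K}[[x]]$ is the space of formal power series $\varphi$ with $\varphi(x/(x-1))=(1-x)^r\varphi(x)$. $\mathcal{F}=\bigoplus_r\mathcal{F}_r$ is the $\mathbb{Z}$-graded algebra with homogeneous components $\mathcal{F}_r$ and multiplication given on homogeneous elements by the Cauchy product (which maps $\mathcal{F}_r\times\mathcal{F}_s$ into $\mathcal{F}_{r+s}$). *)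

theory Defs
  imports "HOL-Computational_Algebra.Formal_Power_Series" "HOL-Library.Poly_Mapping"
begin

definition subst_ser :: "'a::field fps" where
  "subst_ser = fps_X * inverse (fps_X - 1)"

definition Fr :: "int \<Rightarrow> 'a::field fps set" where
  "Fr r = {\<phi>. \<phi> oo subst_ser = (1 - fps_X) powi r * \<phi>}"

text \<open>The graded algebra F = direct sum of the F_r, realised as finitely supported
  families (indexed by the degree r) with r-th component in F_r; multiplication of
  poly_mapping is the convolution, i.e. the Cauchy product on homogeneous elements
  extended bilinearly.\<close>
definition graded_F :: "(int \<Rightarrow>\<^sub>0 'a::field fps) set" where
  "graded_F = {f. \<forall>r. Poly_Mapping.lookup f r \<in> Fr r}"

text \<open>Laurent polynomials F_0[T,T^{-1}]: finitely supported families indexed by the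
  exponent j of T, with coefficients in F_0 (T has degree -1).\<close>
definition laurent_F0 :: "(int \<Rightarrow>\<^sub>0 'a::field fps) set" where
  "laurent_F0 = {c. \<forall>j. Poly_Mapping.lookup c j \<in> Fr 0}"

definition Phi :: "(int \<Rightarrow>\<^sub>0 'a::field fps) \<Rightarrow> (int \<Rightarrow>\<^sub>0 'a fps)" where
  "Phi c = (\<Sum>j\<in>Poly_Mapping.keys c. Poly_Mapping.single (- j) (Poly_Mapping.lookup c j * (fps_X - 2) powi j))"

end

theory Submission imports Defs begin

text \<open>Since x - 2 has invertible constant term, it is a unit of K[[x]], and
  (x - 2)(x/(x-1)) = (1 - x)^{-1}(x - 2) shows that it lies in F_{-1}. Multiplying the
  degree-r component by (x - 2)^r therefore identifies F_r with F_0, and these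
  identifications are compatible with products because F_r F_s \<subseteq> F_{r+s}.
  In terms of families, Phi reindexes j \<mapsto> -j and multiplies by (x - 2)^j, so it is
  its own inverse; it is multiplicative because it is on monomials.\<close>

lemma power_mult_inverse_power_unit:
  fixes u :: "'a::{comm_ring_1,inverse}"
  assumes "u * inverse u = 1"
  shows "u ^ a * inverse u ^ b = (if b \<le> a then u ^ (a - b) else inverse u ^ (b - a))"
proof -
  have "u ^ (d + b) * inverse u ^ b = u ^ d * (u * inverse u) ^ b"
    and "u ^ a * inverse u ^ (d + a) = inverse u ^ d * (u * inverse u) ^ a" for d a
    by (simp_all add: power_add power_mult_distrib mult_ac)
  then have shift: "u ^ (d + b) * inverse u ^ b = u ^ d" "u ^ a * inverse u ^ (d + a) = inverse u ^ d"
    for d a by (simp_all add: assms)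
  show ?thesis
    using shift(1)[of "a - b"] shift(2)[of a "b - a"] by (cases "b \<le> a") simp_all
qed

lemma power_int_add_unit:
  fixes u :: "'a::{comm_ring_1,inverse}"
  assumes "u * inverse u = 1"
  shows "u powi (m + n) = u powi m * u powi n"
  using power_mult_inverse_power_unit[OF assms]
  by (cases m n rule: int_cases4[case_product int_cases4])
     (auto simp: power_int_def nat_add_distrib nat_diff_distrib power_add mult.commute)

lemma fps_nth_subst_ser_0 [simp]: "fps_nth (subst_ser :: 'a::field fps) 0 = 0"
  by (simp add: subst_ser_def)

lemma Fr_mult:
  fixes a b :: "'a::field fps"
  assumes "a \<in> Fr r" "b \<in> Fr s"
  shows "a * b \<in> Fr (r + s)"
proof -
  have unit: "(1 - fps_X :: 'a fps) * inverse (1 - fps_X) = 1"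
    by (rule inverse_mult_eq_1') simp
  have "(a * b) oo subst_ser = (a oo subst_ser) * (b oo subst_ser)"
    by (rule fps_compose_mult_distrib) simp
  also have "\<dots> = ((1 - fps_X) powi r * a) * ((1 - fps_X) powi s * b)"
    using assms by (simp add: Fr_def)
  also have "\<dots> = (1 - fps_X) powi (r + s) * (a * b)"
    by (simp add: power_int_add_unit[OF unit] mult_ac)
  finally show ?thesis by (simp add: Fr_def)
qed

lemma Fr_power:
  fixes a :: "'a::field fps"
  assumes "a \<in> Fr r"
  shows "a ^ n \<in> Fr (int n * r)"
proof (induction n)
  case 0
  show ?case by (simp add: Fr_def)
next
  case (Suc n)
  have "a * a ^ n \<in> Fr (r + int n * r)" by (rule Fr_mult[OF assms Suc])
  then show ?case by (simp add: algebra_simps)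
qed

lemma fps_X_minus_2_in_Fr: "(fps_X - 2 :: 'a::field_char_0 fps) \<in> Fr (-1)"
proof -
  define w :: "'a fps" where "w = inverse (1 - fps_X)"
  have w: "(1 - fps_X) * w = 1"
    unfolding w_def by (rule inverse_mult_eq_1') simp
  have subst: "subst_ser = - fps_X * w"
    unfolding subst_ser_def w_def
    by (metis fps_inverse_minus minus_diff_eq mult_minus_left mult_minus_right)
  have "(fps_X - 2) oo subst_ser = subst_ser - (2 :: 'a fps)"
    by (simp add: fps_compose_sub_distrib)
  also have "\<dots> = w * (fps_X - 2)"
    unfolding subst using w by algebra
  finally show ?thesis by (simp add: Fr_def w_def)
qed

lemma inverse_fps_X_minus_2_in_Fr: "inverse (fps_X - 2 :: 'a::field_char_0 fps) \<in> Fr 1"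
proof -
  have "inverse (fps_X - 2 :: 'a fps) oo subst_ser = inverse ((fps_X - 2) oo subst_ser)"
    by (rule fps_inverse_compose) simp_all
  also have "\<dots> = inverse (inverse (1 - fps_X)) * inverse (fps_X - 2)"
    using fps_X_minus_2_in_Fr[where 'a='a] by (simp add: Fr_def fps_inverse_mult)
  also have "inverse (inverse (1 - fps_X :: 'a fps)) = 1 - fps_X"
    by (rule fps_inverse_idempotent) simp
  finally show ?thesis by (simp add: Fr_def)
qed

lemma fps_X_minus_2_mult_inverse: "(fps_X - 2 :: 'a::field_char_0 fps) * inverse (fps_X - 2) = 1"
  by (rule inverse_mult_eq_1') simp

lemma fps_X_minus_2_powi_in_Fr: "((fps_X - 2) powi j :: 'a::field_char_0 fps) \<in> Fr (-j)"
proof (cases "j \<ge> 0")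
  case True
  have "(fps_X - 2 :: 'a fps) ^ nat j \<in> Fr (int (nat j) * -1)"
    by (rule Fr_power[OF fps_X_minus_2_in_Fr])
  then show ?thesis using True by (simp add: power_int_def)
next
  case False
  have "inverse (fps_X - 2 :: 'a fps) ^ nat (-j) \<in> Fr (int (nat (-j)) * 1)"
    by (rule Fr_power[OF inverse_fps_X_minus_2_in_Fr])
  then show ?thesis using False by (simp add: power_int_def)
qed

lemma fps_X_minus_2_powi_add:
  "((fps_X - 2) powi (i + j) :: 'a::field_char_0 fps) = (fps_X - 2) powi i * (fps_X - 2) powi j"
  by (rule power_int_add_unit[OF fps_X_minus_2_mult_inverse])

lemma lookup_Phi: "Poly_Mapping.lookup (Phi c) r = Poly_Mapping.lookup c (-r) * (fps_X - 2) powi (-r)"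
proof -
  have "Poly_Mapping.lookup (Phi c) r
      = (\<Sum>j\<in>Poly_Mapping.keys c. if j = -r then Poly_Mapping.lookup c j * (fps_X - 2) powi j else 0)"
    unfolding Phi_def lookup_sum lookup_single when_def by (intro sum.cong) auto
  also have "\<dots> = Poly_Mapping.lookup c (-r) * (fps_X - 2) powi (-r)"
    by (simp add: sum.delta' in_keys_iff)
  finally show ?thesis .
qed

lemma Phi_zero: "Phi 0 = 0"
  by (rule poly_mapping_eqI) (simp add: lookup_Phi)

lemma Phi_add: "Phi (a + b) = Phi a + Phi b"
  by (rule poly_mapping_eqI) (simp add: lookup_Phi lookup_add distrib_right)

lemma Phi_sum: "Phi (sum f A) = (\<Sum>x\<in>A. Phi (f x))"
  by (induction A rule: infinite_finite_induct) (simp_all add: Phi_zero Phi_add)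

lemma Phi_single: "Phi (Poly_Mapping.single j x) = Poly_Mapping.single (-j) (x * (fps_X - 2) powi j)"
  by (rule poly_mapping_eqI) (auto simp: lookup_Phi lookup_single when_def)

lemma sum_single_lookup: "(\<Sum>j\<in>Poly_Mapping.keys a. Poly_Mapping.single j (Poly_Mapping.lookup a j)) = a"
proof (rule poly_mapping_eqI)
  fix r
  have "Poly_Mapping.lookup (\<Sum>j\<in>Poly_Mapping.keys a. Poly_Mapping.single j (Poly_Mapping.lookup a j)) r
      = (\<Sum>j\<in>Poly_Mapping.keys a. if j = r then Poly_Mapping.lookup a j else 0)"
    unfolding lookup_sum lookup_single when_def by (intro sum.cong) auto
  also have "\<dots> = Poly_Mapping.lookup a r"
    by (simp add: sum.delta' in_keys_iff)
  finally show "Poly_Mapping.lookup (\<Sum>j\<in>Poly_Mapping.keys a. Poly_Mapping.single j (Poly_Mapping.lookup a j)) r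
      = Poly_Mapping.lookup a r" .
qed

lemma Phi_single_mult:
  "Phi (Poly_Mapping.single i x * Poly_Mapping.single j (y :: 'a::field_char_0 fps))
   = Phi (Poly_Mapping.single i x) * Phi (Poly_Mapping.single j y)"
  by (simp add: mult_single Phi_single fps_X_minus_2_powi_add mult_ac)

lemma Phi_mult: "Phi (a * b :: int \<Rightarrow>\<^sub>0 'a::field_char_0 fps) = Phi a * Phi b"
proof -
  let ?A = "Poly_Mapping.keys a" and ?B = "Poly_Mapping.keys b"
  let ?sa = "\<lambda>i. Poly_Mapping.single i (Poly_Mapping.lookup a i)"
  let ?sb = "\<lambda>j. Poly_Mapping.single j (Poly_Mapping.lookup b j)"
  have "Phi (a * b) = Phi (sum ?sa ?A * sum ?sb ?B)"
    by (simp only: sum_single_lookup)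
  also have "\<dots> = (\<Sum>i\<in>?A. \<Sum>j\<in>?B. Phi (?sa i) * Phi (?sb j))"
    by (simp add: sum_product Phi_sum Phi_single_mult)
  also have "\<dots> = Phi (sum ?sa ?A) * Phi (sum ?sb ?B)"
    by (simp add: Phi_sum sum_product)
  finally show ?thesis by (simp only: sum_single_lookup)
qed

lemma Phi_one: "Phi (1 :: int \<Rightarrow>\<^sub>0 'a::field_char_0 fps) = 1"
  by (simp add: Phi_single flip: single_one)

lemma Phi_map_scale:
  "Phi (Poly_Mapping.map ((*) (fps_const k)) a)
   = Poly_Mapping.map ((*) (fps_const k)) (Phi a :: int \<Rightarrow>\<^sub>0 'a::field_char_0 fps)"
  by (simp add: mult_map_scale_conv_mult Phi_mult Phi_single)

lemma Phi_Phi: "Phi (Phi (f :: int \<Rightarrow>\<^sub>0 'a::field_char_0 fps)) = f"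
  by (rule poly_mapping_eqI)
     (simp add: lookup_Phi mult.assoc flip: fps_X_minus_2_powi_add)

lemma Phi_laurent_F0_subset: "Phi ` laurent_F0 \<subseteq> (graded_F :: (int \<Rightarrow>\<^sub>0 'a::field_char_0 fps) set)"
proof (clarsimp simp: graded_F_def lookup_Phi)
  fix c :: "int \<Rightarrow>\<^sub>0 'a fps" and r
  assume "c \<in> laurent_F0"
  then have "Poly_Mapping.lookup c (-r) * (fps_X - 2) powi (-r) \<in> Fr (0 + - (-r))"
    by (intro Fr_mult fps_X_minus_2_powi_in_Fr) (simp add: laurent_F0_def)
  then show "Poly_Mapping.lookup c (-r) * (fps_X - 2) powi (-r) \<in> Fr r" by simp
qed

lemma Phi_graded_F_subset: "Phi ` graded_F \<subseteq> (laurent_F0 :: (int \<Rightarrow>\<^sub>0 'a::field_char_0 fps) set)"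
proof (clarsimp simp: laurent_F0_def lookup_Phi)
  fix c :: "int \<Rightarrow>\<^sub>0 'a fps" and r
  assume "c \<in> graded_F"
  then have "Poly_Mapping.lookup c (-r) * (fps_X - 2) powi (-r) \<in> Fr (- r + - (-r))"
    by (intro Fr_mult fps_X_minus_2_powi_in_Fr) (simp add: graded_F_def)
  then show "Poly_Mapping.lookup c (-r) * (fps_X - 2) powi (-r) \<in> Fr 0" by simp
qed

lemma bij_betw_Phi: "bij_betw Phi laurent_F0 (graded_F :: (int \<Rightarrow>\<^sub>0 'a::field_char_0 fps) set)"
  by (rule bij_betw_byWitness[where f' = Phi])
     (simp_all add: Phi_Phi Phi_laurent_F0_subset Phi_graded_F_subset)

theorem theorem3p4:
  fixes \<Phi> :: "(int \<Rightarrow>\<^sub>0 'a::field_char_0 fps) \<Rightarrow> (int \<Rightarrow>\<^sub>0 'a fps)"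
  defines "\<Phi> \<equiv> Phi"
  shows "(fps_X - 2 :: 'a fps) \<in> Fr (-1)
    \<and> (\<exists>\<psi>. (fps_X - 2) * \<psi> = (1 :: 'a fps))
    \<and> bij_betw \<Phi> laurent_F0 graded_F
    \<and> (\<forall>a\<in>laurent_F0. \<forall>b\<in>laurent_F0. \<Phi> (a + b) = \<Phi> a + \<Phi> b \<and> \<Phi> (a * b) = \<Phi> a * \<Phi> b)
    \<and> \<Phi> 1 = 1
    \<and> (\<forall>k::'a. \<forall>a\<in>laurent_F0.
         \<Phi> (Poly_Mapping.map (\<lambda>p. fps_const k * p) a) = Poly_Mapping.map (\<lambda>p. fps_const k * p) (\<Phi> a))"
  using fps_X_minus_2_in_Fr fps_X_minus_2_mult_inverse bij_betw_Phi Phi_map_scale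
  unfolding \<Phi>_def by (auto simp: Phi_add Phi_mult Phi_one)

end
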